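(* Let $\mathcal{H}$ be a Hilbert space of finite or countably infinite dimension, let $\Omega$ be a finite set, and let $\mathcal{I}$ and $\mathcal{J}$ be two instruments on $\Omega$ with $\mathcal{I}_\omega(\mathbb{1})=\mathcal{J}_\omega(\mathbb{1})$ for all $\omega\in\Omega$. For $t\in[0,1]$ let $t\mathcal{I}+(1-t)\mathcal{J}$ be the instrument $\omega\mapsto t\mathcal{I}_\omega+(1-t)\mathcal{J}_\omega$. If $\mathrm{sat}(\mathcal{I})=\mathrm{sat}(\mathcal{J})=1$, then $\mathrm{sat}(t\mathcal{I}+(1-t)\mathcal{J})=1$.
   Context: An instrument on a finite set $\Omega$ (Heisenberg picture) is a family $(\mathcal{I}_\omega)_{\omega\in\Omega}$ of normal completely positive maps on $\mathcal{L}(\mathcal{H})$ with $\sum_\omega\mathcal{I}_\omega(\mathbb{1})=\mathbb{1}$. An observable with finite outcome set is a map $\omega\mapsto\mathsf{A}(\omega)$ into positive operators summing to $\mathbb{1}$. For observables $\mathsf{A},\mathsf{B}$ with finite outcome sets, $\mathsf{A}\preceq\mathsf{B}$ means there is $\kappa:\Omega_\mathsf{A}\times\Omega_\mathsf{B}\to[0,1]$ with $\sum_\omega\kappa(\omega|\omega')=1$ for all $\omega'$ and $\mathsf{A}(\omega)=\sum_{\omega'}\kappa(\omega|\omega')\mathsf{B}(\omega')$; $\mathsf{A}\simeq\mathsf{B}$ means both $\mathsf{A}\preceq\mathsf{B}$ and $\mathsf{B}\preceq\mathsf{A}$. For an instrument $\mathcal{I}$ and $n\in\mathbb{N}$, $\mathsf{A}^\mathcal{I}_n$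 is the observable on $\Omega^n$ with $\mathsf{A}^\mathcal{I}_n(\omega_1,\ldots,\omega_n)=\mathcal{I}_{\omega_1}\circ\cdots\circ\mathcal{I}_{\omega_n}(\mathbb{1})$. The saturation step $\mathrm{sat}(\mathcal{I})$ is the smallest positive integer $n$ with $\mathsf{A}^\mathcal{I}_n\simeq\mathsf{A}^\mathcal{I}_{n+1}$, and $\mathrm{sat}(\mathcal{I})=\infty$ if no such $n$ exists. *)

theory Defs
  imports Complex_Main "HOL-Library.Extended_Nat"
begin

text \<open>Concrete model of a complex Hilbert space of finite or countably infinite
dimension: the space l2(D) of square-summable complex sequences supported on an
index set D, a subset of the naturals (dimension = card D, or aleph_0 if D is infinite).
Bounded operators are represented as functions on all sequences that vanish
outside l2(D) (canonical representatives, so that operator equality is function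
equality).\<close>

type_synonym vec = "nat \<Rightarrow> complex"
type_synonym op = "vec \<Rightarrow> vec"
type_synonym sop = "op \<Rightarrow> op"

definition l2 :: "nat set \<Rightarrow> vec set" where
  "l2 D = {x. (\<forall>i. i \<notin> D \<longrightarrow> x i = 0) \<and> summable (\<lambda>i. (cmod (x i))\<^sup>2)}"

definition vnorm :: "vec \<Rightarrow> real" where
  "vnorm x = sqrt (\<Sum>i. (cmod (x i))\<^sup>2)"

definition l2inner :: "vec \<Rightarrow> vec \<Rightarrow> complex" where
  "l2inner x y = (\<Sum>i. cnj (x i) * y i)"

definition zero_op :: op where
  "zero_op = (\<lambda>x i. 0)"

definition ident :: "nat set \<Rightarrow> op" where
  "ident D = (\<lambda>x. if x \<in> l2 D then x else (\<lambda>i. 0))"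

definition op_add :: "op \<Rightarrow> op \<Rightarrow> op" where
  "op_add A B = (\<lambda>x i. A x i + B x i)"

definition op_cscale :: "complex \<Rightarrow> op \<Rightarrow> op" where
  "op_cscale c A = (\<lambda>x i. c * A x i)"

definition op_scale :: "real \<Rightarrow> op \<Rightarrow> op" where
  "op_scale r A = op_cscale (complex_of_real r) A"

definition op_diff :: "op \<Rightarrow> op \<Rightarrow> op" where
  "op_diff A B = (\<lambda>x i. A x i - B x i)"

definition op_sum :: "('a \<Rightarrow> op) \<Rightarrow> 'a set \<Rightarrow> op" where
  "op_sum f S = (\<lambda>x i. \<Sum>a\<in>S. f a x i)"

definition bop :: "nat set \<Rightarrow> op set" where
  "bop D = {A. (\<forall>x\<in>l2 D. A x \<in> l2 D)
             \<and> (\<forall>x\<in>l2 D. \<forall>y\<in>l2 D. \<forall>c. A (\<lambda>i. c * x i + y i) = (\<lambda>i. c * A x i + A y i))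
             \<and> (\<exists>K. \<forall>x\<in>l2 D. vnorm (A x) \<le> K * vnorm x)
             \<and> (\<forall>x. x \<notin> l2 D \<longrightarrow> A x = (\<lambda>i. 0))}"

definition nonneg_complex :: "complex \<Rightarrow> bool" where
  "nonneg_complex z \<longleftrightarrow> Im z = 0 \<and> 0 \<le> Re z"

definition pos_op :: "nat set \<Rightarrow> op \<Rightarrow> bool" where
  "pos_op D A \<longleftrightarrow> A \<in> bop D \<and> (\<forall>x\<in>l2 D. nonneg_complex (l2inner x (A x)))"

text \<open>Positivity of an n x n block operator matrix (an element of M_n(L(H)) = L(H^n)).\<close>
definition block_pos :: "nat set \<Rightarrow> nat \<Rightarrow> (nat \<Rightarrow> nat \<Rightarrow> op) \<Rightarrow> bool" where
  "block_pos D n M \<longleftrightarrow> (\<forall>xs :: nat \<Rightarrow> vec. (\<forall>i<n. xs i \<in> l2 D) \<longrightarrow>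
      nonneg_complex (\<Sum>i<n. \<Sum>j<n. l2inner (xs i) (M i j (xs j))))"

definition linear_sop :: "nat set \<Rightarrow> sop \<Rightarrow> bool" where
  "linear_sop D \<Phi> \<longleftrightarrow> (\<forall>A\<in>bop D. \<Phi> A \<in> bop D)
     \<and> (\<forall>A\<in>bop D. \<forall>B\<in>bop D. \<forall>c. \<Phi> (op_add (op_cscale c A) B) = op_add (op_cscale c (\<Phi> A)) (\<Phi> B))"

text \<open>Complete positivity: id_n \<otimes> \<Phi> (entrywise application on M_n(L(H))) is positive for all n.\<close>
definition completely_positive :: "nat set \<Rightarrow> sop \<Rightarrow> bool" where
  "completely_positive D \<Phi> \<longleftrightarrow> (\<forall>n. \<forall>M. (\<forall>i<n. \<forall>j<n. M i j \<in> bop D) \<and> block_pos D n M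
        \<longrightarrow> block_pos D n (\<lambda>i j. \<Phi> (M i j)))"

definition incr_sup :: "nat set \<Rightarrow> (nat \<Rightarrow> op) \<Rightarrow> op \<Rightarrow> bool" where
  "incr_sup D A B \<longleftrightarrow> (\<forall>k. A k \<in> bop D) \<and> B \<in> bop D
     \<and> (\<forall>k. pos_op D (op_diff (A (Suc k)) (A k)))
     \<and> (\<forall>x\<in>l2 D. (\<lambda>k. l2inner x (A k x)) \<longlonglongrightarrow> l2inner x (B x))"

text \<open>Normality: \<Phi>(sup A_k) = sup \<Phi>(A_k) for increasing bounded sequences
(for separable H this is equivalent to the net formulation).\<close>
definition normal_sop :: "nat set \<Rightarrow> sop \<Rightarrow> bool" where
  "normal_sop D \<Phi> \<longleftrightarrow> (\<forall>A B. incr_sup D A B \<longrightarrow>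
       (\<forall>x\<in>l2 D. (\<lambda>k. l2inner x (\<Phi> (A k) x)) \<longlonglongrightarrow> l2inner x (\<Phi> B x)))"

definition instrument :: "nat set \<Rightarrow> 'w set \<Rightarrow> ('w \<Rightarrow> sop) \<Rightarrow> bool" where
  "instrument D \<Omega> I \<longleftrightarrow> finite \<Omega>
     \<and> (\<forall>\<omega>\<in>\<Omega>. linear_sop D (I \<omega>) \<and> completely_positive D (I \<omega>) \<and> normal_sop D (I \<omega>))
     \<and> op_sum (\<lambda>\<omega>. I \<omega> (ident D)) \<Omega> = ident D"

definition obs_le :: "'a set \<Rightarrow> ('a \<Rightarrow> op) \<Rightarrow> 'b set \<Rightarrow> ('b \<Rightarrow> op) \<Rightarrow> bool" where
  "obs_le \<Omega>A A \<Omega>B B \<longleftrightarrow> (\<exists>\<kappa> :: 'a \<Rightarrow> 'b \<Rightarrow> real.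
      (\<forall>\<omega>\<in>\<Omega>A. \<forall>\<omega>'\<in>\<Omega>B. 0 \<le> \<kappa> \<omega> \<omega>' \<and> \<kappa> \<omega> \<omega>' \<le> 1)
    \<and> (\<forall>\<omega>'\<in>\<Omega>B. (\<Sum>\<omega>\<in>\<Omega>A. \<kappa> \<omega> \<omega>') = 1)
    \<and> (\<forall>\<omega>\<in>\<Omega>A. A \<omega> = op_sum (\<lambda>\<omega>'. op_scale (\<kappa> \<omega> \<omega>') (B \<omega>')) \<Omega>B))"

definition obs_equiv :: "'a set \<Rightarrow> ('a \<Rightarrow> op) \<Rightarrow> 'b set \<Rightarrow> ('b \<Rightarrow> op) \<Rightarrow> bool" where
  "obs_equiv \<Omega>A A \<Omega>B B \<longleftrightarrow> obs_le \<Omega>A A \<Omega>B B \<and> obs_le \<Omega>B B \<Omega>A A"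

definition outcomes :: "'w set \<Rightarrow> nat \<Rightarrow> 'w list set" where
  "outcomes \<Omega> n = {ws. length ws = n \<and> set ws \<subseteq> \<Omega>}"

definition seq_obs :: "nat set \<Rightarrow> ('w \<Rightarrow> sop) \<Rightarrow> 'w list \<Rightarrow> op" where
  "seq_obs D I ws = foldr (\<lambda>\<omega> B. I \<omega> B) ws (ident D)"

definition sat :: "nat set \<Rightarrow> 'w set \<Rightarrow> ('w \<Rightarrow> sop) \<Rightarrow> enat" where
  "sat D \<Omega> I = (if \<exists>n\<ge>1. obs_equiv (outcomes \<Omega> n) (seq_obs D I) (outcomes \<Omega> (Suc n)) (seq_obs D I)
     then enat (LEAST n. n \<ge> 1 \<and> obs_equiv (outcomes \<Omega> n) (seq_obs D I) (outcomes \<Omega> (Suc n)) (seq_obs D I))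
     else \<infinity>)"

definition mix :: "real \<Rightarrow> ('w \<Rightarrow> sop) \<Rightarrow> ('w \<Rightarrow> sop) \<Rightarrow> 'w \<Rightarrow> sop" where
  "mix t I J = (\<lambda>\<omega> A. op_add (op_scale t (I \<omega> A)) (op_scale (1 - t) (J \<omega> A)))"

end

theory Submission imports Defs begin

text \<open>The one-step observable A_1(w) = I_w(1) is the same for I, J and the mixture M.
Every instrument satisfies A_1 \<preceq> A_2 by forgetting the last outcome, so saturation at
step 1 amounts to A_2 \<preceq> A_1. On two outcomes the mixture is affine,
M_a(M_b(1)) = t I_a(I_b(1)) + (1-t) J_a(J_b(1)), because the inner factor I_b(1) = J_b(1)
does not depend on the instrument. Hence the t-mixture of the post-processing kernels
witnessing A_2 \<preceq> A_1 for I and for J witnesses A_2 \<preceq> A_1 for M.\<close>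

section \<open>Bounded operators on l2(D)\<close>

lemma power2_sum_le: "(p + q)\<^sup>2 \<le> 2 * p\<^sup>2 + 2 * (q::real)\<^sup>2"
  using sum_squares_bound[of p q] by (simp add: power2_sum)

lemma l2_lincomb:
  assumes "x \<in> l2 D" "y \<in> l2 D"
  shows "(\<lambda>i. c * x i + y i) \<in> l2 D"
proof -
  have sx: "summable (\<lambda>i. (cmod (x i))\<^sup>2)" and sy: "summable (\<lambda>i. (cmod (y i))\<^sup>2)"
    using assms by (auto simp: l2_def)
  have bound: "(cmod (c * x i + y i))\<^sup>2 \<le> 2 * (cmod c)\<^sup>2 * (cmod (x i))\<^sup>2 + 2 * (cmod (y i))\<^sup>2"
    for i
  proof -
    have "cmod (c * x i + y i) \<le> cmod c * cmod (x i) + cmod (y i)"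
      by (metis norm_mult norm_triangle_ineq)
    hence "(cmod (c * x i + y i))\<^sup>2 \<le> (cmod c * cmod (x i) + cmod (y i))\<^sup>2"
      by (simp add: power_mono)
    also have "\<dots> \<le> 2 * (cmod c)\<^sup>2 * (cmod (x i))\<^sup>2 + 2 * (cmod (y i))\<^sup>2"
      using power2_sum_le[of "cmod c * cmod (x i)" "cmod (y i)"] by (simp add: power_mult_distrib)
    finally show ?thesis .
  qed
  have "summable (\<lambda>i. 2 * (cmod c)\<^sup>2 * (cmod (x i))\<^sup>2 + 2 * (cmod (y i))\<^sup>2)"
    using sx sy by (intro summable_add summable_mult) auto
  hence "summable (\<lambda>i. (cmod (c * x i + y i))\<^sup>2)"
    by (rule summable_comparison_test[rotated]) (use bound in auto)
  thus ?thesis using assms by (auto simp: l2_def)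
qed

lemma vnorm_nonneg: "x \<in> l2 D \<Longrightarrow> 0 \<le> vnorm x"
  by (simp add: vnorm_def l2_def suminf_nonneg)

lemma vnorm_sq: "x \<in> l2 D \<Longrightarrow> (vnorm x)\<^sup>2 = (\<Sum>i. (cmod (x i))\<^sup>2)"
  by (simp add: vnorm_def l2_def suminf_nonneg)

lemma vnorm_cscale:
  assumes "x \<in> l2 D"
  shows "vnorm (\<lambda>i. c * x i) = cmod c * vnorm x"
proof -
  have "(\<Sum>i. (cmod (c * x i))\<^sup>2) = (cmod c)\<^sup>2 * (\<Sum>i. (cmod (x i))\<^sup>2)"
    using assms by (simp add: l2_def norm_mult power_mult_distrib suminf_mult)
  thus ?thesis by (simp add: vnorm_def real_sqrt_mult)
qed

lemma vnorm_add_sq: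
  assumes "u \<in> l2 D" "v \<in> l2 D"
  shows "(vnorm (\<lambda>i. u i + v i))\<^sup>2 \<le> 2 * (vnorm u)\<^sup>2 + 2 * (vnorm v)\<^sup>2"
proof -
  have su: "summable (\<lambda>i. (cmod (u i))\<^sup>2)" and sv: "summable (\<lambda>i. (cmod (v i))\<^sup>2)"
    using assms by (auto simp: l2_def)
  have uv: "(\<lambda>i. u i + v i) \<in> l2 D"
    using l2_lincomb[OF assms, of 1] by simp
  have bound: "(cmod (u i + v i))\<^sup>2 \<le> 2 * (cmod (u i))\<^sup>2 + 2 * (cmod (v i))\<^sup>2" for i
    by (rule order_trans[OF power_mono[OF norm_triangle_ineq] power2_sum_le]) simp
  have "(\<Sum>i. (cmod (u i + v i))\<^sup>2) \<le> (\<Sum>i. 2 * (cmod (u i))\<^sup>2 + 2 * (cmod (v i))\<^sup>2)"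
    by (rule suminf_le)
      (use bound uv su sv in \<open>auto simp: l2_def intro: summable_add summable_mult\<close>)
  also have "\<dots> = 2 * (\<Sum>i. (cmod (u i))\<^sup>2) + 2 * (\<Sum>i. (cmod (v i))\<^sup>2)"
    using su sv by (simp add: suminf_add[symmetric] suminf_mult summable_mult)
  finally show ?thesis using vnorm_sq[OF assms(1)] vnorm_sq[OF assms(2)] vnorm_sq[OF uv] by simp
qed

lemma zero_op_bop: "zero_op \<in> bop D"
  unfolding bop_def zero_op_def by (auto intro!: exI[of _ 0] simp: l2_def vnorm_def)

lemma ident_bop: "ident D \<in> bop D"
  unfolding bop_def ident_def by (auto intro!: exI[of _ 1] simp: l2_lincomb)

lemma bopD:
  assumes "A \<in> bop D"
  shows "\<And>x. x \<in> l2 D \<Longrightarrow> A x \<in> l2 D"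
    and "\<And>x y c. x \<in> l2 D \<Longrightarrow> y \<in> l2 D \<Longrightarrow> A (\<lambda>i. c * x i + y i) = (\<lambda>i. c * A x i + A y i)"
    and "\<exists>K. \<forall>x\<in>l2 D. vnorm (A x) \<le> K * vnorm x"
    and "\<And>x. x \<notin> l2 D \<Longrightarrow> A x = (\<lambda>i. 0)"
  using assms unfolding bop_def by blast+

lemma op_cscale_bop:
  assumes A: "A \<in> bop D"
  shows "op_cscale c A \<in> bop D"
proof -
  obtain K where K: "\<forall>x\<in>l2 D. vnorm (A x) \<le> K * vnorm x"
    using bopD(3)[OF A] by blast
  have "vnorm (op_cscale c A x) \<le> (cmod c * K) * vnorm x" if "x \<in> l2 D" for x
    using K that mult_left_mono[of "vnorm (A x)" "K * vnorm x" "cmod c"]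
    by (simp add: op_cscale_def vnorm_cscale[OF bopD(1)[OF A that]] mult.assoc)
  hence "\<exists>K. \<forall>x\<in>l2 D. vnorm (op_cscale c A x) \<le> K * vnorm x"
    by blast
  moreover have "(\<lambda>i. c * x i) \<in> l2 D" if "x \<in> l2 D" for x
    using l2_lincomb[OF that, of "\<lambda>i. 0"] by (simp add: l2_def)
  ultimately show ?thesis
    using bopD[OF A] unfolding bop_def op_cscale_def by (auto simp: algebra_simps)
qed

lemma op_add_bop:
  assumes A: "A \<in> bop D" and B: "B \<in> bop D"
  shows "op_add A B \<in> bop D"
proof -
  obtain K1 where K1: "\<forall>x\<in>l2 D. vnorm (A x) \<le> K1 * vnorm x"
    using bopD(3)[OF A] by blast
  obtain K2 where K2: "\<forall>x\<in>l2 D. vnorm (B x) \<le> K2 * vnorm x"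
    using bopD(3)[OF B] by blast
  have "vnorm (op_add A B x) \<le> sqrt (2 * (K1\<^sup>2 + K2\<^sup>2)) * vnorm x" if x: "x \<in> l2 D" for x
  proof -
    have "(vnorm (A x))\<^sup>2 \<le> (K1 * vnorm x)\<^sup>2" "(vnorm (B x))\<^sup>2 \<le> (K2 * vnorm x)\<^sup>2"
      using K1 K2 x bopD(1)[OF A x] bopD(1)[OF B x] by (auto intro!: power_mono vnorm_nonneg)
    hence "(vnorm (op_add A B x))\<^sup>2 \<le> (sqrt (2 * (K1\<^sup>2 + K2\<^sup>2)) * vnorm x)\<^sup>2"
      using vnorm_add_sq[OF bopD(1)[OF A x] bopD(1)[OF B x]]
      by (simp add: op_add_def power_mult_distrib algebra_simps)
    thus ?thesis
      using vnorm_nonneg[OF x] by (auto intro: power2_le_imp_le)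
  qed
  hence "\<exists>K. \<forall>x\<in>l2 D. vnorm (op_add A B x) \<le> K * vnorm x"
    by blast
  moreover have "op_add A B x \<in> l2 D" if "x \<in> l2 D" for x
    using l2_lincomb[OF bopD(1)[OF A that] bopD(1)[OF B that], of 1] by (simp add: op_add_def)
  ultimately show ?thesis
    using bopD[OF A] bopD[OF B] unfolding bop_def op_add_def
    by (auto simp: fun_eq_iff algebra_simps)
qed

definition op_mix :: "real \<Rightarrow> op \<Rightarrow> op \<Rightarrow> op" where
  "op_mix t A B = op_add (op_scale t A) (op_scale (1 - t) B)"

lemma op_mix_bop: "A \<in> bop D \<Longrightarrow> B \<in> bop D \<Longrightarrow> op_mix t A B \<in> bop D"
  unfolding op_mix_def op_scale_def by (intro op_add_bop op_cscale_bop)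

lemma op_mix_same: "op_mix t A A = A"
  by (simp add: op_mix_def op_add_def op_scale_def op_cscale_def fun_eq_iff algebra_simps)

lemma mix_eq: "mix t I J \<omega> = (\<lambda>A. op_mix t (I \<omega> A) (J \<omega> A))"
  by (simp add: mix_def op_mix_def)

lemma op_mix_op_scale: "op_mix t (op_scale a A) (op_scale b A) = op_scale (t * a + (1 - t) * b) A"
  by (simp add: op_mix_def op_add_def op_scale_def op_cscale_def fun_eq_iff algebra_simps)

lemma op_sum_cong: "S = T \<Longrightarrow> (\<And>a. a \<in> T \<Longrightarrow> f a = g a) \<Longrightarrow> op_sum f S = op_sum g T"
  by (simp add: op_sum_def)

lemma op_sum_reindex: "inj_on h S \<Longrightarrow> op_sum f (h ` S) = op_sum (\<lambda>a. f (h a)) S"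
  by (simp add: op_sum_def sum.reindex)

lemma op_sum_op_mix: "op_sum (\<lambda>a. op_mix t (A a) (B a)) S = op_mix t (op_sum A S) (op_sum B S)"
  by (simp add: op_sum_def op_mix_def op_add_def op_scale_def op_cscale_def fun_eq_iff
      sum.distrib sum_distrib_left)

section \<open>Linear maps on bounded operators\<close>

lemma linear_sop_bop: "linear_sop D F \<Longrightarrow> A \<in> bop D \<Longrightarrow> F A \<in> bop D"
  unfolding linear_sop_def by blast

lemma linear_sop_add:
  assumes "linear_sop D F" "A \<in> bop D" "B \<in> bop D"
  shows "F (op_add A B) = op_add (F A) (F B)"
proof -
  have "F (op_add (op_cscale 1 A) B) = op_add (op_cscale 1 (F A)) (F B)"
    using assms unfolding linear_sop_def by blast
  thus ?thesis by (simp add: op_cscale_def)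
qed

lemma linear_sop_zero:
  assumes "linear_sop D F"
  shows "F zero_op = zero_op"
proof -
  have "F (op_add (op_cscale (-1) zero_op) zero_op)
      = op_add (op_cscale (-1) (F zero_op)) (F zero_op)"
    using assms zero_op_bop unfolding linear_sop_def by blast
  thus ?thesis by (simp add: op_add_def op_cscale_def zero_op_def)
qed

lemma linear_sop_op_sum:
  assumes F: "linear_sop D F" and "finite S" "\<forall>a\<in>S. X a \<in> bop D"
  shows "op_sum X S \<in> bop D \<and> F (op_sum X S) = op_sum (\<lambda>a. F (X a)) S"
  using assms(2,3)
proof (induction S rule: finite_induct)
  case empty
  have "op_sum Y {} = zero_op" for Y :: "'a \<Rightarrow> op"
    by (simp add: op_sum_def zero_op_def)
  then show ?case using zero_op_bop linear_sop_zero[OF F] by simp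
next
  case (insert a S)
  have "op_sum Y (insert a S) = op_add (Y a) (op_sum Y S)" for Y :: "'a \<Rightarrow> op"
    using insert.hyps by (simp add: op_sum_def op_add_def)
  then show ?case using insert linear_sop_add[OF F] op_add_bop by auto
qed

lemma linear_sop_mix:
  assumes F: "linear_sop D F" and G: "linear_sop D G"
  shows "linear_sop D (\<lambda>A. op_mix t (F A) (G A))"
  unfolding linear_sop_def
proof (intro conjI ballI allI)
  fix A assume "A \<in> bop D"
  thus "op_mix t (F A) (G A) \<in> bop D"
    using F G by (intro op_mix_bop linear_sop_bop[OF F] linear_sop_bop[OF G])
next
  fix A B c assume "A \<in> bop D" "B \<in> bop D"
  hence "F (op_add (op_cscale c A) B) = op_add (op_cscale c (F A)) (F B)"
    and "G (op_add (op_cscale c A) B) = op_add (op_cscale c (G A)) (G B)"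
    using F G unfolding linear_sop_def by blast+
  then show "op_mix t (F (op_add (op_cscale c A) B)) (G (op_add (op_cscale c A) B))
      = op_add (op_cscale c (op_mix t (F A) (G A))) (op_mix t (F B) (G B))"
    unfolding op_mix_def op_add_def op_scale_def op_cscale_def by (simp add: algebra_simps)
qed

lemma foldr_linear_sop_bop:
  assumes "\<forall>\<omega>\<in>set ws. linear_sop D (I \<omega>)" "X \<in> bop D"
  shows "foldr I ws X \<in> bop D"
  using assms
proof (induction ws)
  case (Cons \<omega> ws)
  thus ?case using linear_sop_bop[of D "I \<omega>" "foldr I ws X"] by simp
qed simp

lemma foldr_linear_sop_op_sum:
  assumes "\<forall>\<omega>\<in>set ws. linear_sop D (I \<omega>)" "finite S" "\<forall>c\<in>S. X c \<in> bop D"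
  shows "foldr I ws (op_sum X S) = op_sum (\<lambda>c. foldr I ws (X c)) S"
  using assms(1)
proof (induction ws)
  case Nil
  show ?case by simp
next
  case (Cons \<omega> ws)
  have "linear_sop D (I \<omega>)" and "\<forall>c\<in>S. foldr I ws (X c) \<in> bop D"
    using Cons.prems assms(3) foldr_linear_sop_bop[of ws D I] by auto
  from linear_sop_op_sum[OF this(1) assms(2) this(2)]
  have "I \<omega> (op_sum (\<lambda>c. foldr I ws (X c)) S) = op_sum (\<lambda>c. I \<omega> (foldr I ws (X c))) S"
    by (rule conjunct2)
  thus ?case
    using Cons.IH Cons.prems by simp
qed

section \<open>Post-processing of observables\<close>

lemma obs_le_cong:
  assumes "obs_le \<Omega>A A \<Omega>B B" "\<forall>\<omega>\<in>\<Omega>A. A \<omega> = A' \<omega>" "\<forall>\<omega>\<in>\<Omega>B. B \<omega> = B' \<omega>"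
  shows "obs_le \<Omega>A A' \<Omega>B B'"
  using assms unfolding obs_le_def by (auto cong: op_sum_cong)

lemma obs_le_op_mix:
  assumes "obs_le \<Omega>A A \<Omega>B B" "obs_le \<Omega>A A' \<Omega>B B" "0 \<le> t" "t \<le> 1"
  shows "obs_le \<Omega>A (\<lambda>\<omega>. op_mix t (A \<omega>) (A' \<omega>)) \<Omega>B B"
proof -
  obtain \<kappa> where \<kappa>: "\<forall>\<omega>\<in>\<Omega>A. \<forall>\<omega>'\<in>\<Omega>B. 0 \<le> \<kappa> \<omega> \<omega>' \<and> \<kappa> \<omega> \<omega>' \<le> 1"
    "\<forall>\<omega>'\<in>\<Omega>B. (\<Sum>\<omega>\<in>\<Omega>A. \<kappa> \<omega> \<omega>') = 1"
    "\<forall>\<omega>\<in>\<Omega>A. A \<omega> = op_sum (\<lambda>\<omega>'. op_scale (\<kappa> \<omega> \<omega>') (B \<omega>')) \<Omega>B"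
    using assms(1) unfolding obs_le_def by blast
  obtain \<kappa>' where \<kappa>': "\<forall>\<omega>\<in>\<Omega>A. \<forall>\<omega>'\<in>\<Omega>B. 0 \<le> \<kappa>' \<omega> \<omega>' \<and> \<kappa>' \<omega> \<omega>' \<le> 1"
    "\<forall>\<omega>'\<in>\<Omega>B. (\<Sum>\<omega>\<in>\<Omega>A. \<kappa>' \<omega> \<omega>') = 1"
    "\<forall>\<omega>\<in>\<Omega>A. A' \<omega> = op_sum (\<lambda>\<omega>'. op_scale (\<kappa>' \<omega> \<omega>') (B \<omega>')) \<Omega>B"
    using assms(2) unfolding obs_le_def by blast
  show ?thesis
    unfolding obs_le_def
  proof (intro exI[of _ "\<lambda>\<omega> \<omega>'. t * \<kappa> \<omega> \<omega>' + (1 - t) * \<kappa>' \<omega> \<omega>'"] conjI ballI)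
    fix \<omega> \<omega>' assume "\<omega> \<in> \<Omega>A" "\<omega>' \<in> \<Omega>B"
    hence "0 \<le> \<kappa> \<omega> \<omega>'" "\<kappa> \<omega> \<omega>' \<le> 1" "0 \<le> \<kappa>' \<omega> \<omega>'" "\<kappa>' \<omega> \<omega>' \<le> 1"
      using \<kappa>(1) \<kappa>'(1) by auto
    with assms(3,4) show "0 \<le> t * \<kappa> \<omega> \<omega>' + (1 - t) * \<kappa>' \<omega> \<omega>'"
      and "t * \<kappa> \<omega> \<omega>' + (1 - t) * \<kappa>' \<omega> \<omega>' \<le> 1"
      using convex_bound_le[of "\<kappa> \<omega> \<omega>'" 1 "\<kappa>' \<omega> \<omega>'" t "1 - t"] by simp_all
  next
    fix \<omega>' assume "\<omega>' \<in> \<Omega>B"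
    thus "(\<Sum>\<omega>\<in>\<Omega>A. t * \<kappa> \<omega> \<omega>' + (1 - t) * \<kappa>' \<omega> \<omega>') = 1"
      using \<kappa>(2) \<kappa>'(2) by (simp add: sum.distrib sum_distrib_left[symmetric])
  next
    fix \<omega> assume "\<omega> \<in> \<Omega>A"
    thus "op_mix t (A \<omega>) (A' \<omega>)
        = op_sum (\<lambda>\<omega>'. op_scale (t * \<kappa> \<omega> \<omega>' + (1 - t) * \<kappa>' \<omega> \<omega>') (B \<omega>')) \<Omega>B"
      using \<kappa>(3) \<kappa>'(3) by (simp add: op_sum_op_mix[symmetric] op_mix_op_scale)
  qed
qed

lemma obs_le_marginal:
  assumes "finite \<Omega>A" "finite \<Omega>B" "f ` \<Omega>B \<subseteq> \<Omega>A"
    and "\<forall>\<omega>\<in>\<Omega>A. A \<omega> = op_sum B {\<omega>'\<in>\<Omega>B. f \<omega>' = \<omega>}"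
  shows "obs_le \<Omega>A A \<Omega>B B"
  unfolding obs_le_def
proof (intro exI[of _ "\<lambda>\<omega> \<omega>'. if f \<omega>' = \<omega> then 1 else 0"] conjI ballI)
  fix \<omega>' assume "\<omega>' \<in> \<Omega>B"
  thus "(\<Sum>\<omega>\<in>\<Omega>A. if f \<omega>' = \<omega> then 1 else 0 :: real) = 1"
    using assms(1,3) by (auto simp: sum.delta)
next
  fix \<omega> assume "\<omega> \<in> \<Omega>A"
  thus "A \<omega> = op_sum (\<lambda>\<omega>'. op_scale (if f \<omega>' = \<omega> then 1 else 0) (B \<omega>')) \<Omega>B"
    using assms(2,4) unfolding op_sum_def op_scale_def op_cscale_def
    by (auto simp: sum.inter_filter fun_eq_iff intro!: sum.cong)
qed simp_all

section \<open>Sequential observables\<close>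

lemma finite_outcomes: "finite \<Omega> \<Longrightarrow> finite (outcomes \<Omega> n)"
  unfolding outcomes_def using finite_lists_length_eq by (simp add: conj_commute)

lemma outcomes_Suc_butlast_fibre:
  assumes "ws \<in> outcomes \<Omega> n"
  shows "{v \<in> outcomes \<Omega> (Suc n). butlast v = ws} = (\<lambda>c. ws @ [c]) ` \<Omega>"
proof (intro equalityI subsetI)
  fix v assume v: "v \<in> {v \<in> outcomes \<Omega> (Suc n). butlast v = ws}"
  hence "v \<noteq> []" "set v \<subseteq> \<Omega>" by (auto simp: outcomes_def)
  hence "v = ws @ [last v]" "last v \<in> \<Omega>"
    using v append_butlast_last_id[of v] by auto
  thus "v \<in> (\<lambda>c. ws @ [c]) ` \<Omega>" by blast
qed (use assms in \<open>auto simp: outcomes_def\<close>)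

lemma seq_obs_snoc_sum:
  assumes "finite \<Omega>" "\<forall>\<omega>\<in>\<Omega>. linear_sop D (I \<omega>)"
    and "op_sum (\<lambda>\<omega>. I \<omega> (ident D)) \<Omega> = ident D" and "set ws \<subseteq> \<Omega>"
  shows "op_sum (\<lambda>c. seq_obs D I (ws @ [c])) \<Omega> = seq_obs D I ws"
proof -
  have "\<forall>c\<in>\<Omega>. I c (ident D) \<in> bop D"
    using assms(2) ident_bop linear_sop_bop by blast
  moreover have "\<forall>\<omega>\<in>set ws. linear_sop D (I \<omega>)"
    using assms(2,4) by blast
  ultimately have "op_sum (\<lambda>c. foldr I ws (I c (ident D))) \<Omega>
      = foldr I ws (op_sum (\<lambda>c. I c (ident D)) \<Omega>)"
    using foldr_linear_sop_op_sum assms(1) by metis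
  thus ?thesis using assms(3) by (simp add: seq_obs_def)
qed

lemma seq_obs_le_Suc:
  assumes "finite \<Omega>" "\<forall>\<omega>\<in>\<Omega>. linear_sop D (I \<omega>)"
    and "op_sum (\<lambda>\<omega>. I \<omega> (ident D)) \<Omega> = ident D"
  shows "obs_le (outcomes \<Omega> n) (seq_obs D I) (outcomes \<Omega> (Suc n)) (seq_obs D I)"
proof (rule obs_le_marginal[where f = butlast])
  show "butlast ` outcomes \<Omega> (Suc n) \<subseteq> outcomes \<Omega> n"
    by (auto simp: outcomes_def dest: in_set_butlastD)
  show "\<forall>ws\<in>outcomes \<Omega> n.
      seq_obs D I ws = op_sum (seq_obs D I) {v \<in> outcomes \<Omega> (Suc n). butlast v = ws}"
  proof
    fix ws assume ws: "ws \<in> outcomes \<Omega> n"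
    have "inj_on (\<lambda>c. ws @ [c]) \<Omega>" by (rule inj_onI) simp
    hence "op_sum (seq_obs D I) {v \<in> outcomes \<Omega> (Suc n). butlast v = ws}
        = op_sum (\<lambda>c. seq_obs D I (ws @ [c])) \<Omega>"
      unfolding outcomes_Suc_butlast_fibre[OF ws] by (rule op_sum_reindex)
    also have "\<dots> = seq_obs D I ws"
      using seq_obs_snoc_sum[OF assms] ws by (simp add: outcomes_def)
    finally show "seq_obs D I ws = op_sum (seq_obs D I) {v \<in> outcomes \<Omega> (Suc n). butlast v = ws}"
      by simp
  qed
qed (use assms(1) finite_outcomes in auto)

lemma sat_eq_1_iff:
  "sat D \<Omega> I = 1 \<longleftrightarrow>
     obs_equiv (outcomes \<Omega> 1) (seq_obs D I) (outcomes \<Omega> 2) (seq_obs D I)"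
proof -
  define P where "P n \<longleftrightarrow> n \<ge> 1 \<and>
    obs_equiv (outcomes \<Omega> n) (seq_obs D I) (outcomes \<Omega> (Suc n)) (seq_obs D I)" for n
  have sat: "sat D \<Omega> I = (if \<exists>n. P n then enat (LEAST n. P n) else \<infinity>)"
    by (simp add: sat_def P_def)
  show ?thesis
  proof
    assume "sat D \<Omega> I = 1"
    hence "\<exists>n. P n" and "(LEAST n. P n) = 1"
      unfolding sat by (auto simp: one_enat_def split: if_splits)
    hence "P 1" using LeastI_ex[of P] by simp
    thus "obs_equiv (outcomes \<Omega> 1) (seq_obs D I) (outcomes \<Omega> 2) (seq_obs D I)"
      by (simp add: P_def numeral_2_eq_2)
  next
    assume "obs_equiv (outcomes \<Omega> 1) (seq_obs D I) (outcomes \<Omega> 2) (seq_obs D I)"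
    hence "P 1" by (simp add: P_def numeral_2_eq_2)
    moreover have "(LEAST n. P n) = 1"
      using \<open>P 1\<close> by (intro Least_equality) (auto simp: P_def)
    ultimately show "sat D \<Omega> I = 1"
      unfolding sat by (auto simp: one_enat_def)
  qed
qed

section \<open>Mixtures of instruments\<close>

lemma op_sum_mix_ident:
  assumes "op_sum (\<lambda>\<omega>. I \<omega> (ident D)) \<Omega> = ident D"
    and "op_sum (\<lambda>\<omega>. J \<omega> (ident D)) \<Omega> = ident D"
  shows "op_sum (\<lambda>\<omega>. mix t I J \<omega> (ident D)) \<Omega> = ident D"
  using assms by (simp add: mix_eq op_sum_op_mix op_mix_same)

lemma seq_obs_mix_Cons:
  assumes "seq_obs D I ws = seq_obs D J ws" "seq_obs D (mix t I J) ws = seq_obs D I ws"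
  shows "seq_obs D (mix t I J) (\<omega> # ws)
      = op_mix t (seq_obs D I (\<omega> # ws)) (seq_obs D J (\<omega> # ws))"
  using assms by (simp add: seq_obs_def mix_eq)

lemma seq_obs_mix_outcomes_1:
  assumes "\<forall>\<omega>\<in>\<Omega>. I \<omega> (ident D) = J \<omega> (ident D)" "w \<in> outcomes \<Omega> 1"
  shows "seq_obs D I w = seq_obs D J w" and "seq_obs D (mix t I J) w = seq_obs D I w"
proof -
  obtain \<omega> where w: "w = [\<omega>]" "\<omega> \<in> \<Omega>"
    using assms(2) by (auto simp: outcomes_def length_Suc_conv)
  thus "seq_obs D I w = seq_obs D J w"
    using assms(1) by (simp add: seq_obs_def)
  thus "seq_obs D (mix t I J) w = seq_obs D I w"
    using seq_obs_mix_Cons[of D I "[]" J t \<omega>] w by (simp add: seq_obs_def op_mix_same)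
qed

lemma seq_obs_mix_outcomes_2:
  assumes "\<forall>\<omega>\<in>\<Omega>. I \<omega> (ident D) = J \<omega> (ident D)" "w \<in> outcomes \<Omega> 2"
  shows "seq_obs D (mix t I J) w = op_mix t (seq_obs D I w) (seq_obs D J w)"
proof -
  obtain \<omega> v where w: "w = \<omega> # v" and v: "v \<in> outcomes \<Omega> 1"
    using assms(2) by (auto simp: outcomes_def numeral_2_eq_2 length_Suc_conv)
  show ?thesis
    unfolding w
    by (rule seq_obs_mix_Cons)
      (use seq_obs_mix_outcomes_1[where I = I and J = J, OF assms(1) v] in simp_all)
qed

theorem proposition2:
  fixes D :: "nat set" and \<Omega> :: "'w set" and I J :: "'w \<Rightarrow> sop" and t :: real
  assumes "finite \<Omega>"
    and "instrument D \<Omega> I" and "instrument D \<Omega> J"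
    and "\<forall>\<omega>\<in>\<Omega>. I \<omega> (ident D) = J \<omega> (ident D)"
    and "0 \<le> t" and "t \<le> 1"
    and "sat D \<Omega> I = 1" and "sat D \<Omega> J = 1"
  shows "sat D \<Omega> (mix t I J) = 1"
proof -
  let ?M = "mix t I J" and ?O1 = "outcomes \<Omega> 1" and ?O2 = "outcomes \<Omega> 2"
  have "\<forall>\<omega>\<in>\<Omega>. linear_sop D (?M \<omega>)"
    using assms(2,3) by (simp add: instrument_def mix_eq linear_sop_mix)
  moreover have "op_sum (\<lambda>\<omega>. ?M \<omega> (ident D)) \<Omega> = ident D"
    using assms(2,3) by (simp add: instrument_def op_sum_mix_ident)
  ultimately have marginal: "obs_le ?O1 (seq_obs D ?M) ?O2 (seq_obs D ?M)"
    using seq_obs_le_Suc[OF assms(1), of D ?M 1] by (simp add: numeral_2_eq_2)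
  have one_step_agree:
    "\<forall>w\<in>?O1. seq_obs D I w = seq_obs D ?M w \<and> seq_obs D J w = seq_obs D ?M w"
    using seq_obs_mix_outcomes_1[where I = I and J = J, OF assms(4)] by simp
  have "obs_le ?O2 (seq_obs D I) ?O1 (seq_obs D I)"
    using assms(7) by (simp add: sat_eq_1_iff obs_equiv_def)
  hence "obs_le ?O2 (seq_obs D I) ?O1 (seq_obs D ?M)"
    by (rule obs_le_cong) (use one_step_agree in simp_all)
  moreover have "obs_le ?O2 (seq_obs D J) ?O1 (seq_obs D J)"
    using assms(8) by (simp add: sat_eq_1_iff obs_equiv_def)
  hence "obs_le ?O2 (seq_obs D J) ?O1 (seq_obs D ?M)"
    by (rule obs_le_cong) (use one_step_agree in simp_all)
  ultimately have "obs_le ?O2 (\<lambda>w. op_mix t (seq_obs D I w) (seq_obs D J w)) ?O1 (seq_obs D ?M)"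
    using assms(5,6) by (rule obs_le_op_mix)
  hence "obs_le ?O2 (seq_obs D ?M) ?O1 (seq_obs D ?M)"
    by (rule obs_le_cong)
      (simp_all add: seq_obs_mix_outcomes_2[where I = I and J = J, OF assms(4)])
  with marginal show ?thesis
    by (simp add: sat_eq_1_iff obs_equiv_def)
qed

end
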